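(* Consider any realization of a run of Algorithm 4 (described in the context) under the standing assumption. Then: (i) if $k\in\mathcal{B}\cap\mathcal{S}$, then $f_k-f_{k+1}\ge\tfrac{\eta}{4}\epsilon_H\delta_k^2$; (ii) if $k\in\mathcal{I}\cap\mathcal{S}$, then $\|g_k\|>\epsilon_g$, the flag returned by Algorithm 2 at iteration $k$ is INT-RES, and \[ f_k-f_{k+1}\ \ge\ \tfrac{\eta}{4(7+2L_H)}\min\big\{\|g_{k+1}\|^2\epsilon_H^{-1},\ \epsilon_H^3\big\}. \]
   Context: Let $f:\mathbb{R}^n\to\mathbb{R}$ with gradient $g=\nabla f$ and Hessian $H=\nabla^2f$; $\|\cdot\|$ is the Euclidean norm, $\lambda_{\min}$ the smallest eigenvalue, $\mathbb{S}^n$ the real symmetric $n\times n$ matrices. Write $f_k=f(x_k)$, $g_k=g(x_k)$, $H_k=H(x_k)$, $m_k(x)=f_k+g_k^T(x-x_k)+\tfrac12(x-x_k)^TH_k(x-x_k)$. Exact arithmetic is assumed. Algorithm 2 (truncated CG; inputs nonzero $g$, $H\in\mathbb{S}^n$, $\epsilon>0$, $\delta>0$, $\zeta\in(0,1)$, flag capCG, and $M\ge\|H\|$): $k_{\max}=\min\{n,\tfrac12\sqrt{\kappa}\ln(4\kappa^{3/2}/\zeta)\}$ with $\kappa=(M+2\epsilon)/\epsilon$ if capCG is true, else $k_{\max}=n$. Set $y_0=0,r_0=g,p_0=-g,j=0$. While $j<k_{\max}$: if $p_j^T(H+2\epsilon I)p_j\le\epsilon\|p_j\|^2$, return $s=y_j+\sigma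 p_j$ with $\sigma\ge0$, $\|s\|=\delta$, flag BND-NEG; set $\alpha_j=\|r_j\|^2/(p_j^T(H+2\epsilon I)p_j)$, $y_{j+1}=y_j+\alpha_jp_j$; if $\|y_{j+1}\|\ge\delta$, return $s=y_j+\sigma p_j$ with $\sigma\ge0$, $\|s\|=\delta$, flag BND-NORM; set $r_{j+1}=r_j+\alpha_j(H+2\epsilon I)p_j$; if $\|r_{j+1}\|\le\tfrac\zeta2\min\{\|g\|,\epsilon\|y_{j+1}\|\}$, return $s=y_{j+1}$, flag INT-RES; set $\beta_{j+1}=\|r_{j+1}\|^2/\|r_j\|^2$, $p_{j+1}=-r_{j+1}+\beta_{j+1}p_j$, $j\leftarrow j+1$. On loop exit return $s=y_j$, flag INT-MAX. Algorithm 3 (minimum eigenvalue oracle, MEO; inputs $g$, $H\in\mathbb{S}^n$, $\epsilon>0$, $\delta>0$, $\xi\in(0,1)$, $M\ge\|H\|$): a possibly randomized procedure that either returns $s=\pm\delta v$ with $\|v\|=1$, $v^THv\le-\epsilon/2$, satisfying $g^Ts\le0$, $s^THs\le-\tfrac12\epsilon\|s\|^2$, $\|s\|=\delta$, or returns an indication that $H\succeq-\epsilon I$. Algorithm 4 (inexact trust-region Newton-CG). Inputs: $\epsilon_g,\epsilon_H>0$; $\gamma_1\in(0,1)$, $\gamma_2\ge1$, $\psi\in(1/\gamma_2,1]$; $x_0$; $\delta_0>0$; $\delta_{\max}\ge\delta_0$; $\eta\in(0,1)$; $\zeta\in(0,1)$; $\xi\in[0,1)$; capCG; $M\ge L_g$.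 For $k=0,1,\dots$: evaluate $g_k,H_k$. If $g_k\ne0$, call Algorithm 2 with $(g_k,H_k,\epsilon_H,\delta_k,\zeta,\text{capCG},M)$ obtaining $s_k^{CG}$ and flag outCG; else set $s_k^{CG}=0$, outCG$=$INT-RES. If outCG$\in\{$BND-NEG, BND-NORM$\}$ or ($\|g_k\|>\epsilon_g$ and outCG$=$INT-RES), set $s_k=s_k^{CG}$. Otherwise call Algorithm 3 with $(g_k,H_k,\epsilon_H,\delta_k,\xi,M)$; if it indicates $H_k\succeq-\epsilon_HI$, return $x_k$ (terminate), else take its output as $s_k$. Set $\rho_k=\frac{f_k-f(x_k+s_k)}{m_k(x_k)-m_k(x_k+s_k)}$. If $\rho_k\ge\eta$: $x_{k+1}=x_k+s_k$ and $\delta_{k+1}=\min\{\gamma_2\delta_k,\delta_{\max}\}$ if $\|s_k\|\ge\psi\delta_k$, else $\delta_{k+1}=\delta_k$. If $\rho_k<\eta$: $x_{k+1}=x_k$, $\delta_{k+1}=\gamma_1\|s_k\|$. $\mathcal{K}$ is the set of indices $k$ such that iteration $k$ is completed without termination (for the given realization); $\mathcal{S}=\{k\in\mathcal{K}:\rho_k\ge\eta\}$, $\mathcal{I}=\{k\in\mathcal{K}:\|s_k\|<\delta_k\}$, $\mathcal{B}=\{k\in\mathcal{K}:\|s_k\|=\delta_k\}$. Standing assumption: $\{f_k\}$ is bounded below by some $f_{\rm low}\in\mathbb{R}$, and all segments $[x_k,x_k+s_k]$ lie in an open set on which $f$ is twice continuously differentiable with gradient Lipschitz with constant $L_g>0$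 and Hessian Lipschitz with constant $L_H>0$. *)

theory Defs
  imports "HOL-Analysis.Analysis"
begin

datatype cgflag = BND_NEG | BND_NORM | INT_RES | INT_MAX

definition bnd_step :: "real^'n \<Rightarrow> real^'n \<Rightarrow> real \<Rightarrow> real^'n" where
  "bnd_step y p \<delta> = y + (SOME \<sigma>. \<sigma> \<ge> 0 \<and> norm (y + \<sigma> *\<^sub>R p) = \<delta>) *\<^sub>R p"

definition cg_kmax :: "nat \<Rightarrow> real \<Rightarrow> real \<Rightarrow> real \<Rightarrow> bool \<Rightarrow> real" where
  "cg_kmax n \<epsilon> \<zeta> M capCG =
     (if capCG then
        (let \<kappa> = (M + 2 * \<epsilon>) / \<epsilon>
         in min (real n) (1/2 * sqrt \<kappa> * ln (4 * \<kappa> powr (3/2) / \<zeta>)))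
      else real n)"

text \<open>Main loop of Algorithm 2. The first argument is fuel; it starts at n with j = 0,
  so fuel = 0 only when j = n \<ge> kmax, i.e. when the loop condition fails anyway.\<close>
fun cg_loop :: "nat \<Rightarrow> nat \<Rightarrow> real \<Rightarrow> real^'n \<Rightarrow> real^'n^'n \<Rightarrow> real \<Rightarrow> real \<Rightarrow> real
                 \<Rightarrow> real^'n \<Rightarrow> real^'n \<Rightarrow> real^'n \<Rightarrow> (real^'n) \<times> cgflag" where
  "cg_loop 0 j kmax g H \<epsilon> \<delta> \<zeta> y r p = (y, INT_MAX)"
| "cg_loop (Suc fuel) j kmax g H \<epsilon> \<delta> \<zeta> y r p =
    (if \<not> (real j < kmax) then (y, INT_MAX)
     else let Hp = H *v p + (2 * \<epsilon>) *\<^sub>R p in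
     if p \<bullet> Hp \<le> \<epsilon> * (norm p)\<^sup>2 then (bnd_step y p \<delta>, BND_NEG)
     else let \<alpha> = (norm r)\<^sup>2 / (p \<bullet> Hp); y' = y + \<alpha> *\<^sub>R p in
     if norm y' \<ge> \<delta> then (bnd_step y p \<delta>, BND_NORM)
     else let r' = r + \<alpha> *\<^sub>R Hp in
     if norm r' \<le> \<zeta> / 2 * min (norm g) (\<epsilon> * norm y') then (y', INT_RES)
     else let \<beta> = (norm r')\<^sup>2 / (norm r)\<^sup>2; p' = - r' + \<beta> *\<^sub>R p in
     cg_loop fuel (Suc j) kmax g H \<epsilon> \<delta> \<zeta> y' r' p')"

definition truncated_cg :: "real^'n \<Rightarrow> real^'n^'n \<Rightarrow> real \<Rightarrow> real \<Rightarrow> real \<Rightarrow> bool \<Rightarrow> real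
                            \<Rightarrow> (real^'n) \<times> cgflag" where
  "truncated_cg g H \<epsilon> \<delta> \<zeta> capCG M =
     cg_loop CARD('n) 0 (cg_kmax CARD('n) \<epsilon> \<zeta> M capCG) g H \<epsilon> \<delta> \<zeta> 0 g (- g)"

text \<open>Specification of a (non-terminating) output s of Algorithm 3 (MEO).\<close>
definition meo_output :: "real^'n \<Rightarrow> real^'n^'n \<Rightarrow> real \<Rightarrow> real \<Rightarrow> real^'n \<Rightarrow> bool" where
  "meo_output g H \<epsilon> \<delta> s \<longleftrightarrow>
     (\<exists>v. norm v = 1 \<and> v \<bullet> (H *v v) \<le> - \<epsilon> / 2 \<and> (s = \<delta> *\<^sub>R v \<or> s = - (\<delta> *\<^sub>R v)))
     \<and> g \<bullet> s \<le> 0 \<and> s \<bullet> (H *v s) \<le> - (1/2) * \<epsilon> * (norm s)\<^sup>2 \<and> norm s = \<delta>"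

text \<open>CG step and flag at an iteration of Algorithm 4 (convention for g = 0).\<close>
definition cg_out :: "real^'n \<Rightarrow> real^'n^'n \<Rightarrow> real \<Rightarrow> real \<Rightarrow> real \<Rightarrow> bool \<Rightarrow> real
                      \<Rightarrow> (real^'n) \<times> cgflag" where
  "cg_out g H \<epsilon>H \<delta> \<zeta> capCG M =
     (if g \<noteq> 0 then truncated_cg g H \<epsilon>H \<delta> \<zeta> capCG M else (0, INT_RES))"

definition accept_cg :: "real \<Rightarrow> real^'n \<Rightarrow> cgflag \<Rightarrow> bool" where
  "accept_cg \<epsilon>g g fl \<longleftrightarrow> fl = BND_NEG \<or> fl = BND_NORM \<or> (norm g > \<epsilon>g \<and> fl = INT_RES)"

definition model_decrease :: "real^'n \<Rightarrow> real^'n^'n \<Rightarrow> real^'n \<Rightarrow> real" where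
  "model_decrease g H s = - (g \<bullet> s + 1/2 * (s \<bullet> (H *v s)))"

definition alg4_rho :: "(real^'n \<Rightarrow> real) \<Rightarrow> (real^'n \<Rightarrow> real^'n) \<Rightarrow> (real^'n \<Rightarrow> real^'n^'n)
                        \<Rightarrow> real^'n \<Rightarrow> real^'n \<Rightarrow> real" where
  "alg4_rho f g H xk sk = (f xk - f (xk + sk)) / model_decrease (g xk) (H xk) sk"

text \<open>A realization of a run of Algorithm 4: iterates x, radii delta, steps s, and the set K
  of iterations completed without termination (an initial segment of the naturals).
  Iteration k \<in> K is carried out as specified (the MEO output being any vector meeting
  its specification); the first k \<notin> K is an iteration in which the MEO was called and
  indicated H_k \<succeq> -eps_H I (termination).\<close>
definition alg4_realization ::
  "(real^'n \<Rightarrow> real) \<Rightarrow> (real^'n \<Rightarrow> real^'n) \<Rightarrow> (real^'n \<Rightarrow> real^'n^'n)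
   \<Rightarrow> real \<Rightarrow> real \<Rightarrow> real \<Rightarrow> real \<Rightarrow> real \<Rightarrow> real^'n \<Rightarrow> real \<Rightarrow> real \<Rightarrow> real \<Rightarrow> real
   \<Rightarrow> bool \<Rightarrow> real
   \<Rightarrow> (nat \<Rightarrow> real^'n) \<Rightarrow> (nat \<Rightarrow> real) \<Rightarrow> (nat \<Rightarrow> real^'n) \<Rightarrow> nat set \<Rightarrow> bool" where
  "alg4_realization f g H \<epsilon>g \<epsilon>H \<gamma>1 \<gamma>2 \<psi> x0 \<delta>0 \<delta>max \<eta> \<zeta> capCG M x \<delta> s K \<longleftrightarrow>
     x 0 = x0 \<and> \<delta> 0 = \<delta>0 \<and>
     (\<forall>k j. k \<in> K \<longrightarrow> j \<le> k \<longrightarrow> j \<in> K) \<and>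
     (\<forall>k \<in> K.
        (if accept_cg \<epsilon>g (g (x k)) (snd (cg_out (g (x k)) (H (x k)) \<epsilon>H (\<delta> k) \<zeta> capCG M))
         then s k = fst (cg_out (g (x k)) (H (x k)) \<epsilon>H (\<delta> k) \<zeta> capCG M)
         else meo_output (g (x k)) (H (x k)) \<epsilon>H (\<delta> k) (s k)) \<and>
        (if alg4_rho f g H (x k) (s k) \<ge> \<eta>
         then x (Suc k) = x k + s k \<and>
              \<delta> (Suc k) = (if norm (s k) \<ge> \<psi> * \<delta> k then min (\<gamma>2 * \<delta> k) \<delta>max else \<delta> k)
         else x (Suc k) = x k \<and> \<delta> (Suc k) = \<gamma>1 * norm (s k))) \<and>
     (\<forall>k. k \<notin> K \<longrightarrow> (\<forall>j < k. j \<in> K) \<longrightarrow>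
        \<not> accept_cg \<epsilon>g (g (x k)) (snd (cg_out (g (x k)) (H (x k)) \<epsilon>H (\<delta> k) \<zeta> capCG M)))"

end

theory Submission
  imports Defs
begin

(* A successful iteration decreases f by at least eta times the decrease of the quadratic model m_k.
   Truncated CG works on H_k + 2 eps_H I, and conjugacy of its search directions makes the
   regularised quadratic g^T y + y^T (H_k + 2 eps_H I) y / 2 nonincreasing along the iterates
   (Steihaug's argument); since m_k(x_k) - m_k(x_k + y) is eps_H ||y||^2 minus that quadratic, a
   boundary step decreases the model by at least eps_H delta_k^2 / 2 and an INT-RES step by at least
   eps_H ||s_k||^2. Negative-curvature steps of the MEO give eps_H delta_k^2 / 4 directly. An
   interior step must be an INT-RES step, whose small residual together with the Lipschitz continuity
   of the Hessian bounds ||g_{k+1}|| by L_H ||s_k||^2 + (2 + zeta/2) eps_H ||s_k||; comparing the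
   two terms converts eps_H ||s_k||^2 into the stated minimum.
   The Hessian is only given as the derivative of the gradient; its symmetry, on which CG relies,
   follows from comparing the second differences f(x+u+v) - f(x+u) - f(x+v) + f(x) in both orders. *)

section \<open>Second-order Taylor estimates\<close>

lemma convex_linearization_bound:
  fixes f :: "'a::real_normed_vector \<Rightarrow> 'b::real_normed_vector"
  assumes S: "convex S" and der: "\<And>y. y \<in> S \<Longrightarrow> (f has_derivative f' y) (at y)"
    and B: "\<And>y. y \<in> S \<Longrightarrow> onorm (\<lambda>h. f' y h - f' c h) \<le> B"
    and a: "a \<in> S" and b: "b \<in> S" and c: "c \<in> S"
  shows "norm (f b - f a - f' c (b - a)) \<le> norm (b - a) * B"
proof (rule differentiable_bound_linearization[where S=S])
  show "a + t *\<^sub>R (b - a) \<in> S" if "t \<in> {0..1}" for t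
    using convexD_alt[OF S a b, of t] that by (simp add: algebra_simps)
  show "(f has_derivative f' y) (at y within S)" if "y \<in> S" for y
    using der[OF that] by (rule has_derivative_at_withinI)
  show "onorm (f' y - f' c) \<le> B" if "y \<in> S" for y
    using B[OF that] by (simp add: fun_diff_def)
qed (rule c)

lemma taylor_lipschitz_derivative:
  fixes f :: "'a::real_normed_vector \<Rightarrow> 'b::real_normed_vector"
  assumes der: "\<And>y. y \<in> closed_segment x (x + s) \<Longrightarrow> (f has_derivative f' y) (at y)"
    and lip: "\<And>y. y \<in> closed_segment x (x + s) \<Longrightarrow> onorm (\<lambda>h. f' y h - f' x h) \<le> L * norm (y - x)"
    and L: "0 \<le> L"
  shows "norm (f (x + s) - f x - f' x s) \<le> L * (norm s)\<^sup>2"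
proof -
  have "norm (f (x + s) - f x - f' x ((x + s) - x)) \<le> norm ((x + s) - x) * (L * norm s)"
  proof (rule convex_linearization_bound[where S="closed_segment x (x + s)" and c=x])
    fix y assume y: "y \<in> closed_segment x (x + s)"
    have "L * norm (y - x) \<le> L * norm s"
      using segment_bound1[OF y] L by (simp add: mult_left_mono)
    then show "onorm (\<lambda>h. f' y h - f' x h) \<le> L * norm s"
      using lip[OF y] by linarith
  qed (use der in auto)
  then show ?thesis by (simp add: power2_eq_square mult_ac)
qed

lemma onorm_inner_const_le: "onorm (\<lambda>h. a \<bullet> h) \<le> norm a"
  by (rule onorm_bound) (simp_all add: Cauchy_Schwarz_ineq2)

lemma gradient_increment_bound:
  assumes hess: "\<And>y. y \<in> cball x R \<Longrightarrow> (g has_derivative H y) (at y)"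
    and lip: "\<And>y. y \<in> cball x R \<Longrightarrow> onorm (\<lambda>h. H y h - H x h) \<le> L * norm (y - x)"
    and "0 \<le> L" and z: "z \<in> cball x R" "z + u \<in> cball x R"
  shows "norm (g (z + u) - g z - H x u) \<le> norm u * (L * R)"
proof -
  have "norm (g (z + u) - g z - H x ((z + u) - z)) \<le> norm ((z + u) - z) * (L * R)"
  proof (rule convex_linearization_bound[where S="cball x R" and f'=H and c=x])
    fix y assume y: "y \<in> cball x R"
    then have "L * norm (y - x) \<le> L * R"
      using \<open>0 \<le> L\<close> by (intro mult_left_mono) (auto simp: dist_norm norm_minus_commute)
    then show "onorm (\<lambda>h. H y h - H x h) \<le> L * R"
      using lip[OF y] by linarith
  qed (use z hess order_trans[OF zero_le_dist, of x z R] in auto)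
  then show ?thesis by simp
qed

lemma second_difference_estimate:
  fixes f :: "'a::real_inner \<Rightarrow> real"
  assumes grad: "\<And>y. y \<in> cball x (norm u + norm v) \<Longrightarrow> (f has_derivative (\<lambda>h. g y \<bullet> h)) (at y)"
    and hess: "\<And>y. y \<in> cball x (norm u + norm v) \<Longrightarrow> (g has_derivative H y) (at y)"
    and lip: "\<And>y. y \<in> cball x (norm u + norm v) \<Longrightarrow> onorm (\<lambda>h. H y h - H x h) \<le> L * norm (y - x)"
    and L: "0 \<le> L"
  shows "\<bar>f (x + u + v) - f (x + v) - f (x + u) + f x - v \<bullet> H x u\<bar>
           \<le> 3 * L * norm u * norm v * (norm u + norm v)"
proof -
  \<comment> \<open>The second difference is the increment of \<open>\<Phi>\<close> along [x, x + v]; the derivative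
    (g (z + u) - g z) \<bullet> _ of \<open>\<Phi>\<close> differs from (H x u) \<bullet> _ only by E z.\<close>
  define R where "R = norm u + norm v"
  define S where "S = closed_segment x (x + v)"
  define E where "E z = g (z + u) - g z - H x u" for z
  define \<Phi> where "\<Phi> z = f (z + u) - f z" for z
  have in_ball: "z \<in> cball x R" "z + u \<in> cball x R" if "z \<in> S" for z
  proof -
    have "norm (z - x) \<le> norm v" using segment_bound1[OF that[unfolded S_def]] by simp
    moreover have "norm (z + u - x) \<le> norm (z - x) + norm u"
      using norm_triangle_ineq[of "z - x" u] by (simp add: algebra_simps)
    ultimately show "z \<in> cball x R" "z + u \<in> cball x R"
      unfolding R_def mem_cball dist_norm norm_minus_commute[of x] using norm_ge_zero[of u]
      by linarith+
  qed
  have E_bound: "norm (E z) \<le> norm u * (L * R)" if "z \<in> S" for z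
    unfolding E_def using gradient_increment_bound[OF hess lip L in_ball[OF that]] by (simp add: R_def)
  have "norm (\<Phi> (x + v) - \<Phi> x - (g (x + u) - g x) \<bullet> ((x + v) - x))
          \<le> norm ((x + v) - x) * (2 * (norm u * (L * R)))"
  proof (rule convex_linearization_bound[where S=S and f'="\<lambda>z h. (g (z + u) - g z) \<bullet> h"])
    fix z assume z: "z \<in> S"
    have "((\<lambda>z. z + u) has_derivative (\<lambda>h. h)) (at z)"
      by (auto intro!: derivative_eq_intros)
    from has_derivative_compose[OF this grad[OF in_ball(2)[OF z, unfolded R_def]]]
      has_derivative_diff grad[OF in_ball(1)[OF z, unfolded R_def]]
    show "(\<Phi> has_derivative (\<lambda>h. (g (z + u) - g z) \<bullet> h)) (at z)"
      by (fastforce simp: \<Phi>_def[abs_def] inner_diff_left)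
    have "(\<lambda>h. (g (z + u) - g z) \<bullet> h - (g (x + u) - g x) \<bullet> h) = (\<lambda>h. (E z - E x) \<bullet> h)"
      by (simp add: E_def algebra_simps inner_diff_left)
    moreover have "norm (E z - E x) \<le> 2 * (norm u * (L * R))"
      using E_bound[OF z] E_bound[of x] norm_triangle_ineq4[of "E z" "E x"] by (simp add: S_def)
    ultimately show "onorm (\<lambda>h. (g (z + u) - g z) \<bullet> h - (g (x + u) - g x) \<bullet> h) \<le> 2 * (norm u * (L * R))"
      using onorm_inner_const_le[of "E z - E x"] by simp
  qed (simp_all add: S_def convex_closed_segment)
  moreover have "(g (x + u) - g x) \<bullet> v = v \<bullet> H x u + v \<bullet> E x"
    by (simp add: E_def inner_diff_right inner_commute)
  moreover have "\<bar>v \<bullet> E x\<bar> \<le> norm v * (norm u * (L * R))"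
    using Cauchy_Schwarz_ineq2[of v "E x"] E_bound[of x] by (simp add: S_def order_trans mult_left_mono)
  ultimately have "\<bar>\<Phi> (x + v) - \<Phi> x - v \<bullet> H x u\<bar> \<le> 3 * (norm u * norm v * (L * R))"
    by (simp add: algebra_simps)
  then show ?thesis by (simp add: \<Phi>_def R_def algebra_simps)
qed

lemma derivative_asymmetry_bound:
  fixes f :: "'a::real_inner \<Rightarrow> real"
  assumes grad: "\<And>y. y \<in> cball x (norm u + norm v) \<Longrightarrow> (f has_derivative (\<lambda>h. g y \<bullet> h)) (at y)"
    and hess: "\<And>y. y \<in> cball x (norm u + norm v) \<Longrightarrow> (g has_derivative H y) (at y)"
    and lip: "\<And>y. y \<in> cball x (norm u + norm v) \<Longrightarrow> onorm (\<lambda>h. H y h - H x h) \<le> L * norm (y - x)"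
    and L: "0 \<le> L"
  shows "\<bar>u \<bullet> H x v - v \<bullet> H x u\<bar> \<le> 6 * L * norm u * norm v * (norm u + norm v)"
proof -
  have "cball x (norm v + norm u) = cball x (norm u + norm v)"
    by (simp add: add.commute)
  then have "\<bar>f (x + v + u) - f (x + u) - f (x + v) + f x - u \<bullet> H x v\<bar>
      \<le> 3 * L * norm v * norm u * (norm v + norm u)"
    using second_difference_estimate[of x v u f g H L] grad hess lip L by simp
  moreover have "\<bar>f (x + u + v) - f (x + v) - f (x + u) + f x - v \<bullet> H x u\<bar>
      \<le> 3 * L * norm u * norm v * (norm u + norm v)"
    using second_difference_estimate[OF grad hess lip L] .
  moreover have "x + v + u = x + u + v" by (simp add: algebra_simps)
  ultimately show ?thesis by (simp add: algebra_simps)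
qed

lemma derivative_of_gradient_symmetric:
  fixes f :: "'a::real_inner \<Rightarrow> real"
  assumes U: "open U" and xU: "x \<in> U"
    and grad: "\<And>y. y \<in> U \<Longrightarrow> (f has_derivative (\<lambda>h. g y \<bullet> h)) (at y)"
    and hess: "\<And>y. y \<in> U \<Longrightarrow> (g has_derivative H y) (at y)"
    and lip: "\<And>y. y \<in> U \<Longrightarrow> onorm (\<lambda>h. H y h - H x h) \<le> L * norm (y - x)"
    and L: "0 \<le> L"
  shows "u \<bullet> H x v = v \<bullet> H x u"
proof -
  obtain r where r: "r > 0" "cball x r \<subseteq> U" using U xU open_contains_cball by blast
  interpret H: linear "H x" using has_derivative_linear[OF hess[OF xU]] .
  define C where "C = 6 * L * norm u * norm v * (norm u + norm v)"
  have "\<bar>u \<bullet> H x v - v \<bullet> H x u\<bar> \<le> t * C"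
    if t: "0 < t" "t < r / (norm u + norm v + 1)" for t
  proof -
    have "t * (norm u + norm v) \<le> t * (norm u + norm v + 1)"
      using t by simp
    also have "\<dots> < r"
      using t by (simp add: pos_less_divide_eq add_nonneg_pos)
    finally have "cball x (norm (t *\<^sub>R u) + norm (t *\<^sub>R v)) \<subseteq> U"
      using t by (intro order_trans[OF subset_cball r(2)]) (simp add: algebra_simps)
    then have "\<bar>(t *\<^sub>R u) \<bullet> H x (t *\<^sub>R v) - (t *\<^sub>R v) \<bullet> H x (t *\<^sub>R u)\<bar>
        \<le> 6 * L * norm (t *\<^sub>R u) * norm (t *\<^sub>R v) * (norm (t *\<^sub>R u) + norm (t *\<^sub>R v))"
      by (intro derivative_asymmetry_bound[where f=f and g=g] L) (use grad hess lip in auto)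
    moreover have "(t *\<^sub>R u) \<bullet> H x (t *\<^sub>R v) - (t *\<^sub>R v) \<bullet> H x (t *\<^sub>R u)
        = t\<^sup>2 * (u \<bullet> H x v - v \<bullet> H x u)"
      by (simp add: H.scale power2_eq_square algebra_simps)
    moreover have "6 * L * norm (t *\<^sub>R u) * norm (t *\<^sub>R v) * (norm (t *\<^sub>R u) + norm (t *\<^sub>R v))
        = t\<^sup>2 * (t * C)"
      using t by (simp add: C_def power2_eq_square algebra_simps)
    ultimately have "t\<^sup>2 * \<bar>u \<bullet> H x v - v \<bullet> H x u\<bar> \<le> t\<^sup>2 * (t * C)"
      by (simp add: abs_mult)
    then show ?thesis
      using t by simp
  qed
  then have ev: "eventually (\<lambda>t. \<bar>u \<bullet> H x v - v \<bullet> H x u\<bar> \<le> t * C) (at_right 0)"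
    unfolding eventually_at_right_field using r(1)
    by (intro exI[of _ "r / (norm u + norm v + 1)"]) (auto simp: add_nonneg_pos)
  have "((\<lambda>t. t * C) \<longlongrightarrow> 0) (at_right 0)"
    by (auto intro!: tendsto_eq_intros)
  from tendsto_lowerbound[OF this ev] show ?thesis
    by simp
qed

lemma symmetric_matrix_iff_inner:
  fixes A :: "real^'n^'n"
  shows "transpose A = A \<longleftrightarrow> (\<forall>u v. u \<bullet> (A *v v) = v \<bullet> (A *v u))"
proof -
  have "u \<bullet> (A *v v) = (transpose A *v u) \<bullet> v" for u v
    by (simp add: dot_lmul_matrix)
  then have "(\<forall>u v. u \<bullet> (A *v v) = v \<bullet> (A *v u)) \<longleftrightarrow> (\<forall>u. transpose A *v u = A *v u)"
    by (metis inner_commute vector_eq_ldot)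
  also have "\<dots> \<longleftrightarrow> transpose A = A"
    by (metis matrix_eq)
  finally show ?thesis ..
qed

lemma hessian_matrix_symmetric:
  fixes f :: "real^'n \<Rightarrow> real" and H :: "real^'n \<Rightarrow> real^'n^'n"
  assumes "open U" "x \<in> U"
    and "\<And>y. y \<in> U \<Longrightarrow> (f has_derivative (\<lambda>h. g y \<bullet> h)) (at y)"
    and "\<And>y. y \<in> U \<Longrightarrow> (g has_derivative (\<lambda>h. H y *v h)) (at y)"
    and "\<And>y. y \<in> U \<Longrightarrow> onorm (\<lambda>h. (H y - H x) *v h) \<le> L * norm (y - x)" and "0 \<le> L"
  shows "transpose (H x) = H x"
  unfolding symmetric_matrix_iff_inner
  using derivative_of_gradient_symmetric[of U x f g "\<lambda>y h. H y *v h" L] assms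
  by (simp add: matrix_vector_mult_diff_rdistrib)

section \<open>Truncated conjugate gradients\<close>

lemma shifted_matrix_vector_mult: "(H + c *\<^sub>R mat 1) *v v = H *v v + c *\<^sub>R (v :: real^'n)"
  by (simp add: matrix_vector_mult_add_rdistrib scaleR_matrix_vector_assoc[symmetric])

lemma transpose_shifted_matrix: "transpose (H + c *\<^sub>R mat 1) = transpose (H :: real^'n^'n) + c *\<^sub>R mat 1"
  by (simp add: transpose_def vec_eq_iff mat_def)

lemma norm_add_scaleR_power2:
  "(norm (y + t *\<^sub>R p))\<^sup>2 = (norm y)\<^sup>2 + 2 * t * (y \<bullet> p) + t\<^sup>2 * (norm p)\<^sup>2"
  unfolding power2_norm_eq_inner
  by (simp add: inner_add_left inner_add_right power2_eq_square algebra_simps inner_commute)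

lemma bnd_step_on_sphere:
  fixes y p :: "real^'n"
  assumes "norm y < d" and "p \<noteq> 0"
  obtains t where "0 \<le> t" "bnd_step y p d = y + t *\<^sub>R p" "norm (y + t *\<^sub>R p) = d"
proof -
  define T where "T = 2 * d / norm p"
  have "0 < d" using assms(1) norm_ge_zero[of y] by linarith
  then have "0 \<le> T" and "norm (T *\<^sub>R p) = 2 * d"
    using assms(2) by (simp_all add: T_def)
  then have "d \<le> norm (y + T *\<^sub>R p)"
    using norm_triangle_ineq2[of "T *\<^sub>R p" "- y"] assms(1) by (simp add: add.commute)
  moreover have "norm (y + 0 *\<^sub>R p) \<le> d" using assms(1) by simp
  moreover have "continuous_on {0..T} (\<lambda>t. norm (y + t *\<^sub>R p))"
    by (intro continuous_intros)
  ultimately have "\<exists>t. 0 \<le> t \<and> norm (y + t *\<^sub>R p) = d"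
    using IVT'[of "\<lambda>t. norm (y + t *\<^sub>R p)" 0 d T] \<open>0 \<le> T\<close> by auto
  from someI_ex[OF this] show thesis
    by (intro that[of "SOME t. 0 \<le> t \<and> norm (y + t *\<^sub>R p) = d"]) (simp_all add: bnd_step_def)
qed

definition cg_objective :: "real^'n \<Rightarrow> real^'n^'n \<Rightarrow> real^'n \<Rightarrow> real" where
  "cg_objective g A y = g \<bullet> y + 1/2 * (y \<bullet> (A *v y))"

lemma model_decrease_eq_shifted_objective:
  "model_decrease g H s = e * (norm s)\<^sup>2 - cg_objective g (H + (2 * e) *\<^sub>R mat 1) s"
  unfolding model_decrease_def cg_objective_def shifted_matrix_vector_mult
  by (simp add: inner_add_right power2_norm_eq_inner algebra_simps)

(* V stands for the span of the previous directions p_0, ..., p_{j-1}: CG iterates stay in it,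
   residuals are orthogonal to it, and p_j + r_j = beta_j p_{j-1} lies in it. *)
locale cg_state =
  fixes g :: "real^'n" and A :: "real^'n^'n" and y r p :: "real^'n" and V :: "(real^'n) set"
  assumes symmetric: "transpose A = A"
    and residual: "r = A *v y + g"
    and residual_nonzero: "r \<noteq> 0"
    and subspace: "subspace V"
    and iterate_in: "y \<in> V"
    and residual_orthogonal: "\<And>v. v \<in> V \<Longrightarrow> r \<bullet> v = 0"
    and direction_residual_in: "p + r \<in> V"
    and direction_conjugate: "\<And>v. v \<in> V \<Longrightarrow> p \<bullet> (A *v v) = 0"
    and krylov: "\<And>v. v \<in> V \<Longrightarrow> A *v v \<in> span (insert p V)"
begin

lemma inner_matrix_commute: "u \<bullet> (A *v v) = v \<bullet> (A *v u)"
  using symmetric symmetric_matrix_iff_inner by blast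

lemma residual_inner_direction: "r \<bullet> p = - (norm r)\<^sup>2"
  using residual_orthogonal[OF direction_residual_in]
  by (simp add: inner_add_right power2_norm_eq_inner)

lemma direction_nonzero: "p \<noteq> 0"
  using residual_inner_direction residual_nonzero by auto

lemma objective_along_direction:
  "cg_objective g A (y + t *\<^sub>R p) = cg_objective g A y - t * (norm r)\<^sup>2 + t\<^sup>2 / 2 * (p \<bullet> (A *v p))"
proof -
  have "cg_objective g A (y + t *\<^sub>R p) = cg_objective g A y + t * (r \<bullet> p) + t\<^sup>2 / 2 * (p \<bullet> (A *v p))"
    using inner_matrix_commute[of y p] unfolding residual cg_objective_def
    by (simp add: matrix_vector_right_distrib matrix_vector_mult_scaleR inner_add_left inner_add_right
        power2_eq_square algebra_simps inner_commute)
  then show ?thesis using residual_inner_direction by simp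
qed

lemma span_insert_direction_cases:
  assumes "v \<in> span (insert p V)"
  obtains w k where "w \<in> V" "v = w + k *\<^sub>R p"
proof -
  have "span V = V" using subspace by (simp add: span_eq_iff)
  then obtain k where "v - k *\<^sub>R p \<in> V"
    using assms span_breakdown_eq[of v p V] by metis
  then show thesis by (intro that[of "v - k *\<^sub>R p" k]) simp_all
qed

lemma boundary_step_negative_curvature:
  assumes "0 \<le> y \<bullet> p" "norm y < d" "cg_objective g A y \<le> 0"
    and "0 \<le> e" "p \<bullet> (A *v p) \<le> e * (norm p)\<^sup>2"
  shows "norm (bnd_step y p d) = d \<and> cg_objective g A (bnd_step y p d) \<le> e / 2 * d\<^sup>2"
proof -
  obtain t where t: "0 \<le> t" "bnd_step y p d = y + t *\<^sub>R p" "norm (y + t *\<^sub>R p) = d"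
    using bnd_step_on_sphere[OF assms(2) direction_nonzero] .
  then have "t\<^sup>2 * (norm p)\<^sup>2 \<le> d\<^sup>2"
    using norm_add_scaleR_power2[of y t p] assms(1) by simp
  have "t\<^sup>2 / 2 * (p \<bullet> (A *v p)) \<le> t\<^sup>2 / 2 * (e * (norm p)\<^sup>2)"
    using assms(5) by (intro mult_left_mono) simp_all
  also have "\<dots> = e / 2 * (t\<^sup>2 * (norm p)\<^sup>2)" by simp
  also have "\<dots> \<le> e / 2 * d\<^sup>2"
    using \<open>t\<^sup>2 * (norm p)\<^sup>2 \<le> d\<^sup>2\<close> assms(4) by (intro mult_left_mono) simp_all
  moreover have "0 \<le> t * (norm r)\<^sup>2" using t(1) by simp
  ultimately have "cg_objective g A (y + t *\<^sub>R p) \<le> e / 2 * d\<^sup>2"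
    using assms(3) objective_along_direction[of t] by linarith
  then show ?thesis using t by simp
qed

end

locale cg_step = cg_state +
  fixes \<alpha> :: real and y' r' p' :: "real^'n"
  assumes curvature: "0 < p \<bullet> (A *v p)"
    and step_length: "\<alpha> = (norm r)\<^sup>2 / (p \<bullet> (A *v p))"
    and iterate_step: "y' = y + \<alpha> *\<^sub>R p"
    and residual_step: "r' = r + \<alpha> *\<^sub>R (A *v p)"
    and direction_step: "p' = - r' + ((norm r')\<^sup>2 / (norm r)\<^sup>2) *\<^sub>R p"
begin

lemma step_length_pos: "0 < \<alpha>"
  using curvature residual_nonzero by (simp add: step_length)

lemma step_length_curvature: "\<alpha> * (p \<bullet> (A *v p)) = (norm r)\<^sup>2"
  using curvature by (simp add: step_length)

lemma objective_step: "cg_objective g A y' = cg_objective g A y - \<alpha> * (norm r)\<^sup>2 / 2"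
  using objective_along_direction[of \<alpha>] step_length_curvature
  by (simp add: iterate_step power2_eq_square algebra_simps)

lemma residual_step_eq: "r' = A *v y' + g"
  by (simp add: residual_step iterate_step residual matrix_vector_right_distrib matrix_vector_mult_scaleR)

lemma residual_step_orthogonal:
  assumes "v \<in> span (insert p V)"
  shows "r' \<bullet> v = 0"
proof -
  obtain w k where w: "w \<in> V" "v = w + k *\<^sub>R p"
    using span_insert_direction_cases[OF assms] .
  have "(A *v p) \<bullet> w = p \<bullet> (A *v w)"
    using inner_matrix_commute[of w p] by (simp add: inner_commute)
  then have "r' \<bullet> w = r \<bullet> w + \<alpha> * (p \<bullet> (A *v w))"
    by (simp add: residual_step inner_add_left)
  moreover have "r' \<bullet> p = r \<bullet> p + \<alpha> * (p \<bullet> (A *v p))"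
    by (simp add: residual_step inner_add_left inner_add_right inner_commute)
  ultimately show ?thesis
    using w residual_orthogonal direction_conjugate residual_inner_direction step_length_curvature
    by (simp add: inner_add_right)
qed

lemma residual_in_span: "r \<in> span (insert p V)"
proof -
  have "p + r \<in> span (insert p V)" and "p \<in> span (insert p V)"
    using direction_residual_in by (simp_all add: span_base)
  then have "(p + r) - p \<in> span (insert p V)" by (rule span_diff)
  then show ?thesis by simp
qed

lemma iterate_step_in_span: "y' \<in> span (insert p V)"
  using iterate_in by (simp add: iterate_step span_add span_base span_scale)

lemma matrix_direction_eq: "A *v p = (1 / \<alpha>) *\<^sub>R (r' - r)"
  using step_length_pos by (simp add: residual_step)

lemma direction_step_conjugate:
  assumes "v \<in> span (insert p V)"
  shows "p' \<bullet> (A *v v) = 0"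
proof -
  obtain w k where w: "w \<in> V" "v = w + k *\<^sub>R p"
    using span_insert_direction_cases[OF assms] .
  have "p' \<bullet> (A *v w) = 0"
    using residual_step_orthogonal[OF krylov[OF w(1)]] direction_conjugate[OF w(1)]
    by (simp add: direction_step inner_add_left inner_diff_left)
  moreover have "p' \<bullet> (A *v p) = 0"
  proof -
    have "r' \<bullet> (A *v p) = (norm r')\<^sup>2 / \<alpha>"
      using residual_step_orthogonal[OF residual_in_span]
      by (simp add: matrix_direction_eq inner_diff_right power2_norm_eq_inner)
    moreover have "(norm r')\<^sup>2 / (norm r)\<^sup>2 * (p \<bullet> (A *v p)) = (norm r')\<^sup>2 / \<alpha>"
      using curvature residual_nonzero by (simp add: step_length)
    ultimately show ?thesis by (simp add: direction_step inner_add_left inner_diff_left)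
  qed
  ultimately show ?thesis
    by (simp add: w(2) matrix_vector_right_distrib matrix_vector_mult_scaleR inner_add_right)
qed

lemma krylov_step:
  assumes "v \<in> span (insert p V)"
  shows "A *v v \<in> span (insert p' (span (insert p V)))"
proof -
  let ?W = "span (insert p' (span (insert p V)))"
  have sub: "span (insert p V) \<subseteq> ?W"
    by (meson span_superset subset_insertI order_trans)
  have "p \<in> ?W" and "p' \<in> ?W"
    using sub by (auto simp: span_base)
  then have "((norm r')\<^sup>2 / (norm r)\<^sup>2) *\<^sub>R p - p' \<in> ?W"
    by (simp add: span_diff span_scale)
  then have "r' \<in> ?W" by (simp add: direction_step)
  then have "A *v p \<in> ?W"
    using residual_in_span sub by (simp add: matrix_direction_eq span_diff span_scale subsetD)
  moreover obtain w k where "w \<in> V" "v = w + k *\<^sub>R p"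
    using span_insert_direction_cases[OF assms] .
  ultimately show ?thesis
    using krylov sub by (simp add: matrix_vector_right_distrib matrix_vector_mult_scaleR span_add span_scale subsetD)
qed

lemma state_step:
  assumes "r' \<noteq> 0"
  shows "cg_state g A y' r' p' (span (insert p V))"
proof
  show "transpose A = A" by (rule symmetric)
  show "r' = A *v y' + g" by (rule residual_step_eq)
  show "r' \<noteq> 0" by (rule assms)
  show "subspace (span (insert p V))" by (rule subspace_span)
  show "y' \<in> span (insert p V)" by (rule iterate_step_in_span)
  show "p' + r' \<in> span (insert p V)"
    by (simp add: direction_step span_base span_scale)
  show "r' \<bullet> v = 0" if "v \<in> span (insert p V)" for v
    using that by (rule residual_step_orthogonal)
  show "p' \<bullet> (A *v v) = 0" if "v \<in> span (insert p V)" for v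
    using that by (rule direction_step_conjugate)
  show "A *v v \<in> span (insert p' (span (insert p V)))" if "v \<in> span (insert p V)" for v
    using that by (rule krylov_step)
qed

lemma iterate_direction_step:
  assumes "0 \<le> y \<bullet> p"
  shows "0 \<le> y' \<bullet> p'"
proof -
  have "y' \<bullet> p' = (norm r')\<^sup>2 / (norm r)\<^sup>2 * (y' \<bullet> p) - r' \<bullet> y'"
    by (simp add: direction_step inner_add_right inner_diff_right inner_commute)
  moreover have "r' \<bullet> y' = 0"
    by (rule residual_step_orthogonal[OF iterate_step_in_span])
  moreover have "y' \<bullet> p = y \<bullet> p + \<alpha> * (norm p)\<^sup>2"
    by (simp add: iterate_step inner_add_left power2_norm_eq_inner)
  ultimately show ?thesis
    using assms step_length_pos by simp
qed

lemma boundary_step_norm: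
  assumes "0 \<le> y \<bullet> p" "norm y < d" "cg_objective g A y \<le> 0" "d \<le> norm y'"
  shows "norm (bnd_step y p d) = d \<and> cg_objective g A (bnd_step y p d) \<le> 0"
proof -
  obtain t where t: "0 \<le> t" "bnd_step y p d = y + t *\<^sub>R p" "norm (y + t *\<^sub>R p) = d"
    using bnd_step_on_sphere[OF assms(2) direction_nonzero] .
  have "t \<le> \<alpha>"
  proof (rule ccontr)
    assume "\<not> t \<le> \<alpha>"
    then have "\<alpha>\<^sup>2 < t\<^sup>2"
      using step_length_pos by (intro power_strict_mono) auto
    then have "\<alpha>\<^sup>2 * (norm p)\<^sup>2 < t\<^sup>2 * (norm p)\<^sup>2"
      using direction_nonzero by simp
    moreover have "\<alpha> * (y \<bullet> p) \<le> t * (y \<bullet> p)"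
      using \<open>\<not> t \<le> \<alpha>\<close> assms(1) by (intro mult_right_mono) auto
    ultimately have "(norm y')\<^sup>2 < d\<^sup>2"
      using t(3) norm_add_scaleR_power2[of y \<alpha> p] norm_add_scaleR_power2[of y t p]
      by (simp add: iterate_step)
    moreover have "d\<^sup>2 \<le> (norm y')\<^sup>2"
      using assms(2,4) norm_ge_zero[of y] by (intro power_mono) linarith+
    ultimately show False by linarith
  qed
  then have "t * (t / 2) * (p \<bullet> (A *v p)) \<le> t * \<alpha> * (p \<bullet> (A *v p))"
    using t(1) curvature by (intro mult_right_mono mult_left_mono) simp_all
  then have "t\<^sup>2 / 2 * (p \<bullet> (A *v p)) \<le> t * (norm r)\<^sup>2"
    using step_length_curvature by (simp add: power2_eq_square mult.assoc)
  then show ?thesis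
    using t assms(3) objective_along_direction[of t] by simp
qed

end

(* 0 <= y \<bullet> p makes ||y + t p|| increasing in t >= 0, which places the boundary point of the
   BND-NORM exit before the CG step. *)
definition cg_invariant ::
  "real^'n \<Rightarrow> real^'n^'n \<Rightarrow> real \<Rightarrow> real^'n \<Rightarrow> real^'n \<Rightarrow> real^'n \<Rightarrow> bool" where
  "cg_invariant g A \<delta> y r p \<longleftrightarrow>
     (\<exists>V. cg_state g A y r p V) \<and> 0 \<le> y \<bullet> p \<and> cg_objective g A y \<le> 0 \<and> norm y < \<delta>"

definition cg_result_spec ::
  "real^'n \<Rightarrow> real^'n^'n \<Rightarrow> real \<Rightarrow> real \<Rightarrow> real \<Rightarrow> (real^'n) \<times> cgflag \<Rightarrow> bool" where
  "cg_result_spec g A \<epsilon> \<delta> \<zeta> res \<longleftrightarrow>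
     ((snd res = BND_NEG \<or> snd res = BND_NORM) \<longrightarrow>
        norm (fst res) = \<delta> \<and> cg_objective g A (fst res) \<le> \<epsilon> / 2 * \<delta>\<^sup>2)
   \<and> (snd res = INT_RES \<longrightarrow>
        norm (fst res) < \<delta> \<and> cg_objective g A (fst res) \<le> 0
        \<and> norm (A *v fst res + g) \<le> \<zeta> / 2 * \<epsilon> * norm (fst res))"

lemma (in cg_state) negative_curvature_result:
  assumes "cg_invariant g A \<delta> y r p" "0 \<le> \<epsilon>" "p \<bullet> (A *v p) \<le> \<epsilon> * (norm p)\<^sup>2"
  shows "cg_result_spec g A \<epsilon> \<delta> \<zeta> (bnd_step y p \<delta>, BND_NEG)"
  using boundary_step_negative_curvature[of \<delta> \<epsilon>] assms
  by (simp add: cg_invariant_def cg_result_spec_def)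

context cg_step
begin

lemma objective_step_nonpos:
  assumes "cg_objective g A y \<le> 0"
  shows "cg_objective g A y' \<le> 0"
proof -
  have "0 \<le> \<alpha> * (norm r)\<^sup>2"
    using step_length_pos by simp
  then show ?thesis
    using objective_step assms by linarith
qed

lemma boundary_result:
  assumes "cg_invariant g A \<delta> y r p" "0 \<le> \<epsilon>" "\<delta> \<le> norm y'"
  shows "cg_result_spec g A \<epsilon> \<delta> \<zeta> (bnd_step y p \<delta>, BND_NORM)"
proof -
  have "norm (bnd_step y p \<delta>) = \<delta> \<and> cg_objective g A (bnd_step y p \<delta>) \<le> 0"
    using boundary_step_norm[of \<delta>] assms by (auto simp: cg_invariant_def)
  moreover have "0 \<le> \<epsilon> / 2 * \<delta>\<^sup>2" using assms(2) by simp
  ultimately show ?thesis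
    by (simp add: cg_result_spec_def)
qed

lemma residual_result:
  assumes "cg_invariant g A \<delta> y r p" "0 \<le> \<zeta>" "norm y' < \<delta>"
    and "norm r' \<le> \<zeta> / 2 * min (norm g) (\<epsilon> * norm y')"
  shows "cg_result_spec g A \<epsilon> \<delta> \<zeta> (y', INT_RES)"
proof -
  have "\<zeta> / 2 * min (norm g) (\<epsilon> * norm y') \<le> \<zeta> / 2 * (\<epsilon> * norm y')"
    using assms(2) by (intro mult_left_mono) auto
  then show ?thesis
    using assms objective_step_nonpos residual_step_eq by (simp add: cg_invariant_def cg_result_spec_def)
qed

lemma invariant_step:
  assumes "cg_invariant g A \<delta> y r p" "norm y' < \<delta>" "r' \<noteq> 0"
  shows "cg_invariant g A \<delta> y' r' p'"
  using assms state_step iterate_direction_step objective_step_nonpos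
  unfolding cg_invariant_def by blast

lemma positive_curvature_result:
  assumes inv: "cg_invariant g A \<delta> y r p" and "0 \<le> \<epsilon>" "0 \<le> \<zeta>"
    and continue: "cg_invariant g A \<delta> y' r' p' \<Longrightarrow> cg_result_spec g A \<epsilon> \<delta> \<zeta> res"
  shows "cg_result_spec g A \<epsilon> \<delta> \<zeta>
    (if \<delta> \<le> norm y' then (bnd_step y p \<delta>, BND_NORM)
     else if norm r' \<le> \<zeta> / 2 * min (norm g) (\<epsilon> * norm y') then (y', INT_RES) else res)"
proof -
  have "0 \<le> \<zeta> / 2 * min (norm g) (\<epsilon> * norm y')"
    using assms by simp
  then have "r' \<noteq> 0" if "\<not> norm r' \<le> \<zeta> / 2 * min (norm g) (\<epsilon> * norm y')"
    using that by auto
  then show ?thesis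
    using boundary_result[OF inv \<open>0 \<le> \<epsilon>\<close>] residual_result[OF inv \<open>0 \<le> \<zeta>\<close>]
      invariant_step[OF inv] continue by auto
qed

end

lemma cg_invariant_init:
  assumes "transpose A = A" "g \<noteq> 0" "0 < \<delta>"
  shows "cg_invariant g A \<delta> 0 g (- g)"
proof -
  have "cg_state g A 0 g (- g) {0}"
    using assms by unfold_locales (auto simp: subspace_0 span_zero)
  then show ?thesis
    using assms by (auto simp: cg_invariant_def cg_objective_def)
qed

lemma cg_loop_Suc_shifted:
  assumes "\<And>v. H *v v + (2 * \<epsilon>) *\<^sub>R v = A *v v"
    and "\<alpha> = (norm r)\<^sup>2 / (p \<bullet> (A *v p))" "y' = y + \<alpha> *\<^sub>R p" "r' = r + \<alpha> *\<^sub>R (A *v p)"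
    and "p' = - r' + ((norm r')\<^sup>2 / (norm r)\<^sup>2) *\<^sub>R p"
  shows "cg_loop (Suc fuel) j kmax g H \<epsilon> \<delta> \<zeta> y r p =
    (if \<not> real j < kmax then (y, INT_MAX)
     else if p \<bullet> (A *v p) \<le> \<epsilon> * (norm p)\<^sup>2 then (bnd_step y p \<delta>, BND_NEG)
     else if \<delta> \<le> norm y' then (bnd_step y p \<delta>, BND_NORM)
     else if norm r' \<le> \<zeta> / 2 * min (norm g) (\<epsilon> * norm y') then (y', INT_RES)
     else cg_loop fuel (Suc j) kmax g H \<epsilon> \<delta> \<zeta> y' r' p')"
  using assms by (simp add: Let_def)

lemma cg_loop_result_spec:
  fixes H A :: "real^'n^'n"
  assumes shift: "\<And>v. H *v v + (2 * \<epsilon>) *\<^sub>R v = A *v v" and "0 < \<epsilon>" "0 \<le> \<zeta>"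
  shows "cg_invariant g A \<delta> y r p \<Longrightarrow> cg_result_spec g A \<epsilon> \<delta> \<zeta> (cg_loop fuel j kmax g H \<epsilon> \<delta> \<zeta> y r p)"
proof (induction fuel arbitrary: j y r p)
  case 0
  then show ?case by (simp add: cg_result_spec_def)
next
  case (Suc fuel)
  obtain V where "cg_state g A y r p V"
    using Suc.prems by (auto simp: cg_invariant_def)
  then interpret cg_state g A y r p V .
  define \<alpha> where "\<alpha> = (norm r)\<^sup>2 / (p \<bullet> (A *v p))"
  define y' where "y' = y + \<alpha> *\<^sub>R p"
  define r' where "r' = r + \<alpha> *\<^sub>R (A *v p)"
  define p' where "p' = - r' + ((norm r')\<^sup>2 / (norm r)\<^sup>2) *\<^sub>R p"
  note loop = cg_loop_Suc_shifted[OF shift \<alpha>_def y'_def r'_def p'_def]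
  have step: "cg_step g A y r p V \<alpha> y' r' p'" if "\<epsilon> * (norm p)\<^sup>2 < p \<bullet> (A *v p)"
  proof
    have "0 \<le> \<epsilon> * (norm p)\<^sup>2" using \<open>0 < \<epsilon>\<close> by simp
    then show "0 < p \<bullet> (A *v p)" using that by linarith
  qed (simp_all add: \<alpha>_def y'_def r'_def p'_def)
  consider (stop) "\<not> real j < kmax"
    | (negative) "real j < kmax" "p \<bullet> (A *v p) \<le> \<epsilon> * (norm p)\<^sup>2"
    | (positive) "real j < kmax" "\<epsilon> * (norm p)\<^sup>2 < p \<bullet> (A *v p)"
    by linarith
  then show ?case
  proof cases
    case stop
    then show ?thesis unfolding loop by (simp add: cg_result_spec_def)
  next
    case negative
    with negative_curvature_result[OF Suc.prems] show ?thesis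
      using \<open>0 < \<epsilon>\<close> unfolding loop by simp
  next
    case positive
    with cg_step.positive_curvature_result[OF step Suc.prems _ \<open>0 \<le> \<zeta>\<close> Suc.IH] show ?thesis
      using \<open>0 < \<epsilon>\<close> unfolding loop by simp
  qed
qed

lemma truncated_cg_result_spec:
  fixes H :: "real^'n^'n"
  assumes "transpose H = H" "0 < \<epsilon>" "0 \<le> \<zeta>" "g \<noteq> 0" "0 < \<delta>"
  shows "cg_result_spec g (H + (2 * \<epsilon>) *\<^sub>R mat 1) \<epsilon> \<delta> \<zeta> (truncated_cg g H \<epsilon> \<delta> \<zeta> capCG M)"
proof -
  have "transpose (H + (2 * \<epsilon>) *\<^sub>R mat 1) = H + (2 * \<epsilon>) *\<^sub>R mat 1"
    using assms(1) by (simp add: transpose_shifted_matrix)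
  then show ?thesis
    unfolding truncated_cg_def using assms
    by (intro cg_loop_result_spec cg_invariant_init) (simp_all add: shifted_matrix_vector_mult)
qed

section \<open>Iterations of the trust-region method\<close>

definition alg4_step ::
  "real \<Rightarrow> real^'n \<Rightarrow> real^'n^'n \<Rightarrow> real \<Rightarrow> real \<Rightarrow> real \<Rightarrow> bool \<Rightarrow> real \<Rightarrow> real^'n \<Rightarrow> bool" where
  "alg4_step \<epsilon>g g H \<epsilon> \<delta> \<zeta> capCG M s \<longleftrightarrow>
     (if accept_cg \<epsilon>g g (snd (cg_out g H \<epsilon> \<delta> \<zeta> capCG M))
      then s = fst (cg_out g H \<epsilon> \<delta> \<zeta> capCG M)
      else meo_output g H \<epsilon> \<delta> s)"

lemma realization_iteration:
  assumes "alg4_realization f g H \<epsilon>g \<epsilon>H \<gamma>1 \<gamma>2 \<psi> x0 \<delta>0 \<delta>max \<eta> \<zeta> capCG M x \<delta> s K" and "k \<in> K"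
  shows "alg4_step \<epsilon>g (g (x k)) (H (x k)) \<epsilon>H (\<delta> k) \<zeta> capCG M (s k)"
    and "\<eta> \<le> alg4_rho f g H (x k) (s k) \<Longrightarrow> x (Suc k) = x k + s k"
proof -
  note iteration = assms(1)[unfolded alg4_realization_def, THEN conjunct2, THEN conjunct2,
      THEN conjunct2, THEN conjunct1, rule_format, OF assms(2)]
  show "alg4_step \<epsilon>g (g (x k)) (H (x k)) \<epsilon>H (\<delta> k) \<zeta> capCG M (s k)"
    using conjunct1[OF iteration] by (simp add: alg4_step_def)
  show "x (Suc k) = x k + s k" if "\<eta> \<le> alg4_rho f g H (x k) (s k)"
    using conjunct2[OF iteration] that by simp
qed

lemma meo_output_model_decrease:
  assumes "meo_output g H \<epsilon> \<delta> s"
  shows "\<epsilon> / 4 * (norm s)\<^sup>2 \<le> model_decrease g H s" and "norm s = \<delta>"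
  using assms unfolding meo_output_def model_decrease_def by auto

lemma accepted_cg_result_spec:
  fixes H :: "real^'n^'n"
  assumes "transpose H = H" "0 < \<epsilon>" "0 \<le> \<zeta>" "0 < \<epsilon>g" "0 < \<delta>"
    and accept: "accept_cg \<epsilon>g g (snd (cg_out g H \<epsilon> \<delta> \<zeta> capCG M))"
  shows "cg_result_spec g (H + (2 * \<epsilon>) *\<^sub>R mat 1) \<epsilon> \<delta> \<zeta> (cg_out g H \<epsilon> \<delta> \<zeta> capCG M)"
proof -
  have "g \<noteq> 0"
    using accept \<open>0 < \<epsilon>g\<close> by (auto simp: cg_out_def accept_cg_def)
  then show ?thesis
    using truncated_cg_result_spec assms by (simp add: cg_out_def)
qed

lemma boundary_step_model_decrease:
  fixes H :: "real^'n^'n"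
  assumes "transpose H = H" "0 < \<epsilon>" "0 \<le> \<zeta>" "0 < \<epsilon>g"
    and step: "alg4_step \<epsilon>g g H \<epsilon> \<delta> \<zeta> capCG M s" and boundary: "norm s = \<delta>" "0 < \<delta>"
  shows "\<epsilon> / 4 * \<delta>\<^sup>2 \<le> model_decrease g H s"
proof (cases "accept_cg \<epsilon>g g (snd (cg_out g H \<epsilon> \<delta> \<zeta> capCG M))")
  case True
  let ?res = "cg_out g H \<epsilon> \<delta> \<zeta> capCG M"
  have s: "s = fst ?res" using step True by (simp add: alg4_step_def)
  have spec: "cg_result_spec g (H + (2 * \<epsilon>) *\<^sub>R mat 1) \<epsilon> \<delta> \<zeta> ?res"
    using accepted_cg_result_spec assms True by blast
  then have "snd ?res = BND_NEG \<or> snd ?res = BND_NORM"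
    using True s boundary by (cases "snd ?res") (auto simp: accept_cg_def cg_result_spec_def)
  then have "cg_objective g (H + (2 * \<epsilon>) *\<^sub>R mat 1) s \<le> \<epsilon> / 2 * \<delta>\<^sup>2"
    using spec s by (auto simp: cg_result_spec_def)
  moreover have "model_decrease g H s = \<epsilon> * \<delta>\<^sup>2 - cg_objective g (H + (2 * \<epsilon>) *\<^sub>R mat 1) s"
    using boundary by (simp add: model_decrease_eq_shifted_objective[of _ _ _ \<epsilon>])
  moreover have "0 \<le> \<epsilon> * \<delta>\<^sup>2" using \<open>0 < \<epsilon>\<close> by simp
  ultimately show ?thesis by linarith
next
  case False
  then show ?thesis
    using step boundary meo_output_model_decrease[of g H \<epsilon> \<delta> s] by (simp add: alg4_step_def)
qed

lemma interior_step_properties: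
  fixes H :: "real^'n^'n"
  assumes "transpose H = H" "0 < \<epsilon>" "0 \<le> \<zeta>" "0 < \<epsilon>g"
    and step: "alg4_step \<epsilon>g g H \<epsilon> \<delta> \<zeta> capCG M s" and interior: "norm s < \<delta>"
  shows "\<epsilon>g < norm g" and "snd (cg_out g H \<epsilon> \<delta> \<zeta> capCG M) = INT_RES"
    and "\<epsilon> * (norm s)\<^sup>2 \<le> model_decrease g H s"
    and "norm (H *v s + (2 * \<epsilon>) *\<^sub>R s + g) \<le> \<zeta> / 2 * \<epsilon> * norm s"
proof -
  let ?res = "cg_out g H \<epsilon> \<delta> \<zeta> capCG M"
  have accept: "accept_cg \<epsilon>g g (snd ?res)"
  proof (rule ccontr)
    assume "\<not> accept_cg \<epsilon>g g (snd ?res)"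
    then have "meo_output g H \<epsilon> \<delta> s" using step by (simp add: alg4_step_def)
    then show False using interior meo_output_model_decrease(2)[of g H \<epsilon> \<delta> s] by simp
  qed
  then have s: "s = fst ?res" using step by (simp add: alg4_step_def)
  have "0 < \<delta>" using interior norm_ge_zero[of s] by linarith
  then have spec: "cg_result_spec g (H + (2 * \<epsilon>) *\<^sub>R mat 1) \<epsilon> \<delta> \<zeta> ?res"
    using accepted_cg_result_spec[OF assms(1-4) _ accept] by blast
  then show flag: "snd ?res = INT_RES"
    using accept s interior by (cases "snd ?res") (auto simp: accept_cg_def cg_result_spec_def)
  then show "\<epsilon>g < norm g"
    using accept by (simp add: accept_cg_def)
  show "\<epsilon> * (norm s)\<^sup>2 \<le> model_decrease g H s"
    using spec flag s by (simp add: cg_result_spec_def model_decrease_eq_shifted_objective[of _ _ _ \<epsilon>])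
  show "norm (H *v s + (2 * \<epsilon>) *\<^sub>R s + g) \<le> \<zeta> / 2 * \<epsilon> * norm s"
    using spec flag s by (simp add: cg_result_spec_def shifted_matrix_vector_mult)
qed

lemma successful_step_nonzero:
  assumes "\<eta> \<le> alg4_rho f g H x s" "0 < \<eta>"
  shows "s \<noteq> 0"
  using assms by (auto simp: alg4_rho_def model_decrease_def)

lemma successful_step_decrease:
  assumes "\<eta> \<le> alg4_rho f g H x s" "0 < \<eta>" "c \<le> model_decrease (g x) (H x) s" "0 < c"
  shows "\<eta> * c \<le> f x - f (x + s)"
proof -
  have "\<eta> * model_decrease (g x) (H x) s \<le> f x - f (x + s)"
    using assms by (simp add: alg4_rho_def pos_le_divide_eq)
  moreover have "\<eta> * c \<le> \<eta> * model_decrease (g x) (H x) s"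
    using assms by (intro mult_left_mono) simp_all
  ultimately show ?thesis by linarith
qed

lemma gradient_after_step_bound:
  fixes g :: "real^'n \<Rightarrow> real^'n" and H :: "real^'n \<Rightarrow> real^'n^'n"
  assumes hess: "\<And>y. y \<in> closed_segment x (x + s) \<Longrightarrow> (g has_derivative (\<lambda>h. H y *v h)) (at y)"
    and lip: "\<And>y. y \<in> closed_segment x (x + s) \<Longrightarrow> onorm (\<lambda>h. (H y - H x) *v h) \<le> L * norm (y - x)"
    and "0 \<le> L" "0 \<le> \<epsilon>"
    and residual: "norm (H x *v s + (2 * \<epsilon>) *\<^sub>R s + g x) \<le> \<zeta> / 2 * \<epsilon> * norm s"
  shows "norm (g (x + s)) \<le> L * (norm s)\<^sup>2 + (2 + \<zeta> / 2) * \<epsilon> * norm s"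
proof -
  have taylor: "norm (g (x + s) - g x - H x *v s) \<le> L * (norm s)\<^sup>2"
    using taylor_lipschitz_derivative[of x s g "\<lambda>y h. H y *v h" L] hess lip \<open>0 \<le> L\<close>
    by (simp add: matrix_vector_mult_diff_rdistrib)
  let ?T = "g (x + s) - g x - H x *v s" and ?R = "H x *v s + (2 * \<epsilon>) *\<^sub>R s + g x"
  have "g (x + s) = ?T + ?R - (2 * \<epsilon>) *\<^sub>R s" by simp
  then have "norm (g (x + s)) \<le> norm (?T + ?R) + norm ((2 * \<epsilon>) *\<^sub>R s)"
    by (metis norm_triangle_ineq4)
  also have "\<dots> \<le> norm ?T + norm ?R + 2 * \<epsilon> * norm s"
    using norm_triangle_ineq[of ?T ?R] \<open>0 \<le> \<epsilon>\<close> by simp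
  finally show ?thesis
    using taylor residual by (simp add: algebra_simps)
qed

lemma min_div_cube_le_of_linear:
  fixes \<epsilon> G c n :: real
  assumes "0 < \<epsilon>" "0 \<le> G" "G \<le> c * (\<epsilon> * n)"
  shows "min (G\<^sup>2 / \<epsilon>) (\<epsilon> ^ 3) \<le> c\<^sup>2 * (\<epsilon> * n\<^sup>2)"
proof -
  have "G\<^sup>2 \<le> (c * (\<epsilon> * n))\<^sup>2"
    using assms by (intro power_mono) simp_all
  then have "G\<^sup>2 / \<epsilon> \<le> c\<^sup>2 * (\<epsilon> * n\<^sup>2)"
    using \<open>0 < \<epsilon>\<close> by (simp add: divide_le_eq power2_eq_square mult_ac)
  then show ?thesis by simp
qed

lemma min_div_cube_le_of_quadratic:
  fixes \<epsilon> G c n :: real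
  assumes "0 < \<epsilon>" "0 \<le> G" "G \<le> c * n\<^sup>2"
  shows "min (G\<^sup>2 / \<epsilon>) (\<epsilon> ^ 3) \<le> c * (\<epsilon> * n\<^sup>2)"
proof (cases "G \<le> \<epsilon>\<^sup>2")
  case True
  then have "G\<^sup>2 / \<epsilon> \<le> G * \<epsilon>"
    using assms(1,2) by (simp add: divide_le_eq power2_eq_square mult_left_mono mult.assoc)
  also have "\<dots> \<le> c * n\<^sup>2 * \<epsilon>"
    using assms by (simp add: mult_right_mono)
  finally show ?thesis by (simp add: mult_ac)
next
  case False
  then have "\<epsilon> * \<epsilon>\<^sup>2 \<le> \<epsilon> * (c * n\<^sup>2)"
    using assms by (intro mult_left_mono) simp_all
  then show ?thesis by (simp add: power3_eq_cube power2_eq_square mult_ac)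
qed

lemma min_gradient_cube_bound:
  fixes \<epsilon> L G n b :: real
  assumes "0 < \<epsilon>" "0 < L" "0 \<le> n" "0 \<le> G" "0 \<le> b" "b \<le> 5 / 2"
    and G: "G \<le> L * n\<^sup>2 + b * \<epsilon> * n"
  shows "min (G\<^sup>2 / \<epsilon>) (\<epsilon> ^ 3) / (4 * (7 + 2 * L)) \<le> \<epsilon> * n\<^sup>2"
proof -
  have "0 \<le> \<epsilon> * n\<^sup>2" using assms by simp
  have "min (G\<^sup>2 / \<epsilon>) (\<epsilon> ^ 3) \<le> (25 + 2 * L) * (\<epsilon> * n\<^sup>2)"
  proof (cases "L * n \<le> b * \<epsilon>")
    case True
    then have "L * n\<^sup>2 \<le> b * \<epsilon> * n"
      using mult_right_mono[OF True \<open>0 \<le> n\<close>] by (simp add: power2_eq_square mult.assoc)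
    moreover have "b * (\<epsilon> * n) \<le> 5 / 2 * (\<epsilon> * n)"
      using assms by (intro mult_right_mono) simp_all
    ultimately have "G \<le> 5 * (\<epsilon> * n)" using G by (simp add: mult.assoc)
    from min_div_cube_le_of_linear[OF \<open>0 < \<epsilon>\<close> \<open>0 \<le> G\<close> this]
    show ?thesis
      using \<open>0 < L\<close> \<open>0 \<le> \<epsilon> * n\<^sup>2\<close> mult_right_mono[of 25 "25 + 2 * L" "\<epsilon> * n\<^sup>2"] by simp
  next
    case False
    then have "b * \<epsilon> * n \<le> L * n\<^sup>2"
      using mult_right_mono[of "b * \<epsilon>" "L * n" n] \<open>0 \<le> n\<close> by (simp add: power2_eq_square mult.assoc)
    then have "G \<le> (2 * L) * n\<^sup>2" using G by linarith
    from min_div_cube_le_of_quadratic[OF \<open>0 < \<epsilon>\<close> \<open>0 \<le> G\<close> this]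
    show ?thesis
      using \<open>0 \<le> \<epsilon> * n\<^sup>2\<close> mult_right_mono[of "2 * L" "25 + 2 * L" "\<epsilon> * n\<^sup>2"] by simp
  qed
  also have "\<dots> \<le> 4 * (7 + 2 * L) * (\<epsilon> * n\<^sup>2)"
    using \<open>0 < L\<close> \<open>0 \<le> \<epsilon> * n\<^sup>2\<close> by (intro mult_right_mono) simp_all
  finally show ?thesis
    using \<open>0 < L\<close> by (simp add: pos_divide_le_eq mult_ac)
qed

lemma boundary_iteration_decrease:
  fixes H :: "real^'n \<Rightarrow> real^'n^'n"
  assumes "transpose (H x) = H x" "0 < \<epsilon>" "0 \<le> \<zeta>" "0 < \<epsilon>g" "0 < \<eta>"
    and step: "alg4_step \<epsilon>g (g x) (H x) \<epsilon> \<delta> \<zeta> capCG M s" and boundary: "norm s = \<delta>"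
    and success: "\<eta> \<le> alg4_rho f g H x s"
  shows "\<eta> / 4 * \<epsilon> * \<delta>\<^sup>2 \<le> f x - f (x + s)"
proof -
  have "0 < \<delta>"
    using boundary zero_less_norm_iff[of s] successful_step_nonzero[OF success \<open>0 < \<eta>\<close>] by simp
  then have "\<epsilon> / 4 * \<delta>\<^sup>2 \<le> model_decrease (g x) (H x) s" and "0 < \<epsilon> / 4 * \<delta>\<^sup>2"
    using boundary_step_model_decrease[OF assms(1-4) step boundary] \<open>0 < \<epsilon>\<close> by simp_all
  from successful_step_decrease[OF success \<open>0 < \<eta>\<close> this] show ?thesis
    by (simp add: mult_ac)
qed

lemma interior_iteration_decrease:
  fixes g :: "real^'n \<Rightarrow> real^'n" and H :: "real^'n \<Rightarrow> real^'n^'n"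
  assumes "transpose (H x) = H x" "0 < \<epsilon>" "0 \<le> \<zeta>" "\<zeta> \<le> 1" "0 < \<epsilon>g" "0 < \<eta>" "0 < L"
    and step: "alg4_step \<epsilon>g (g x) (H x) \<epsilon> \<delta> \<zeta> capCG M s" and interior: "norm s < \<delta>"
    and success: "\<eta> \<le> alg4_rho f g H x s"
    and hess: "\<And>y. y \<in> closed_segment x (x + s) \<Longrightarrow> (g has_derivative (\<lambda>h. H y *v h)) (at y)"
    and lip: "\<And>y. y \<in> closed_segment x (x + s) \<Longrightarrow> onorm (\<lambda>h. (H y - H x) *v h) \<le> L * norm (y - x)"
  shows "\<epsilon>g < norm (g x) \<and> snd (cg_out (g x) (H x) \<epsilon> \<delta> \<zeta> capCG M) = INT_RES
     \<and> \<eta> / (4 * (7 + 2 * L)) * min ((norm (g (x + s)))\<^sup>2 / \<epsilon>) (\<epsilon> ^ 3) \<le> f x - f (x + s)"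
proof -
  note props = interior_step_properties[OF assms(1-3,5) step interior]
  have "norm (g (x + s)) \<le> L * (norm s)\<^sup>2 + (2 + \<zeta> / 2) * \<epsilon> * norm s"
    using hess lip props(4) assms(2,7) by (intro gradient_after_step_bound) simp_all
  from min_gradient_cube_bound[OF \<open>0 < \<epsilon>\<close> \<open>0 < L\<close> norm_ge_zero norm_ge_zero _ _ this]
  have "\<eta> * (min ((norm (g (x + s)))\<^sup>2 / \<epsilon>) (\<epsilon> ^ 3) / (4 * (7 + 2 * L))) \<le> \<eta> * (\<epsilon> * (norm s)\<^sup>2)"
    using assms(3,4,6) by (intro mult_left_mono) simp_all
  also have "\<dots> \<le> f x - f (x + s)"
    using successful_step_decrease[OF success \<open>0 < \<eta>\<close> props(3)]
      successful_step_nonzero[OF success \<open>0 < \<eta>\<close>] \<open>0 < \<epsilon>\<close> by simp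
  finally show ?thesis
    using props(1,2) by simp
qed

theorem lemma4p3:
  fixes f :: "real^'n \<Rightarrow> real" and g :: "real^'n \<Rightarrow> real^'n" and H :: "real^'n \<Rightarrow> real^'n^'n"
    and U :: "(real^'n) set"
    and \<epsilon>g \<epsilon>H \<gamma>1 \<gamma>2 \<psi> \<delta>0 \<delta>max \<eta> \<zeta> \<xi> M Lg LH flow :: real
    and x0 :: "real^'n" and capCG :: bool
    and x :: "nat \<Rightarrow> real^'n" and \<delta> :: "nat \<Rightarrow> real" and s :: "nat \<Rightarrow> real^'n"
    and K :: "nat set" and k :: nat
  assumes params: "\<epsilon>g > 0" "\<epsilon>H > 0" "0 < \<gamma>1" "\<gamma>1 < 1" "\<gamma>2 \<ge> 1"
      "1 / \<gamma>2 < \<psi>" "\<psi> \<le> 1" "\<delta>0 > 0" "\<delta>max \<ge> \<delta>0" "0 < \<eta>" "\<eta> < 1"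
      "0 < \<zeta>" "\<zeta> < 1" "0 \<le> \<xi>" "\<xi> < 1" "M \<ge> Lg"
    and run: "alg4_realization f g H \<epsilon>g \<epsilon>H \<gamma>1 \<gamma>2 \<psi> x0 \<delta>0 \<delta>max \<eta> \<zeta> capCG M x \<delta> s K"
    and bdd: "\<forall>j \<in> K. flow \<le> f (x j)"
    and U_open: "open U"
    and segs: "\<forall>j \<in> K. closed_segment (x j) (x j + s j) \<subseteq> U"
    and grad: "\<forall>y \<in> U. (f has_derivative (\<lambda>h. g y \<bullet> h)) (at y)"
    and hess: "\<forall>y \<in> U. (g has_derivative (\<lambda>h. H y *v h)) (at y)"
    and hess_cont: "continuous_on U H"
    and Lg_pos: "Lg > 0" and LH_pos: "LH > 0"
    and g_lip: "\<forall>y \<in> U. \<forall>z \<in> U. norm (g y - g z) \<le> Lg * norm (y - z)"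
    and H_lip: "\<forall>y \<in> U. \<forall>z \<in> U. onorm (\<lambda>v. (H y - H z) *v v) \<le> LH * norm (y - z)"
    and kK: "k \<in> K"
  shows "(norm (s k) = \<delta> k \<and> alg4_rho f g H (x k) (s k) \<ge> \<eta> \<longrightarrow>
            f (x k) - f (x (Suc k)) \<ge> \<eta> / 4 * \<epsilon>H * (\<delta> k)\<^sup>2)
       \<and> (norm (s k) < \<delta> k \<and> alg4_rho f g H (x k) (s k) \<ge> \<eta> \<longrightarrow>
            norm (g (x k)) > \<epsilon>g
            \<and> snd (cg_out (g (x k)) (H (x k)) \<epsilon>H (\<delta> k) \<zeta> capCG M) = INT_RES
            \<and> f (x k) - f (x (Suc k)) \<ge>
                \<eta> / (4 * (7 + 2 * LH)) * min ((norm (g (x (Suc k))))\<^sup>2 / \<epsilon>H) (\<epsilon>H ^ 3))"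
proof -
  \<comment> \<open>The lower bound on f, the Lipschitz bound on g and the continuity of H only matter
    across iterations; a single iteration needs none of them.\<close>
  have seg: "closed_segment (x k) (x k + s k) \<subseteq> U" using segs kK by blast
  then have xU: "x k \<in> U" by auto
  have sym: "transpose (H (x k)) = H (x k)"
    by (rule hessian_matrix_symmetric[OF U_open xU]) (use grad hess H_lip xU LH_pos in auto)
  have \<zeta>: "0 \<le> \<zeta>" "\<zeta> \<le> 1" using params by simp_all
  have hess_seg: "\<And>y. y \<in> closed_segment (x k) (x k + s k) \<Longrightarrow> (g has_derivative (\<lambda>h. H y *v h)) (at y)"
    and lip_seg: "\<And>y. y \<in> closed_segment (x k) (x k + s k) \<Longrightarrow>
                    onorm (\<lambda>h. (H y - H (x k)) *v h) \<le> LH * norm (y - x k)"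
    using seg hess H_lip xU by blast+
  note step = realization_iteration[OF run kK]
  show ?thesis
    using boundary_iteration_decrease[where x="x k" and H=H and g=g and f=f,
        OF sym params(2) \<zeta>(1) params(1,10) step(1)]
      interior_iteration_decrease[where x="x k" and H=H and g=g and f=f,
        OF sym params(2) \<zeta> params(1,10) LH_pos step(1) _ _ hess_seg lip_seg]
      step(2)
    by auto
qed

end
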